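(* Let $\mathbf X=(X_1,\dots,X_k)$, $2\le k\le n-1$, be homogeneous coordinates of proper cycles, $S$ a vector with $(S\mid S)\le0$, with $X_1,\dots,X_k,S$ linearly independent and $\Delta(\mathbf X,S)<0$. Let $y$ be a proper cycle with $y\notin\langle\mathbf x,s\rangle$ and $(Y\mid S)\neq0$. Then there exists a proper cycle $z\in\langle\mathbf x,s\rangle^\perp$ with $(Z\mid Y)=0$ if and only if $\delta(\mathbf x,y,s)\le0$.
   Context: Let $n\ge 3$. For $X=(\xi_0,\boldsymbol\xi_1,\xi_2,\xi_3)$ and $Y=(\eta_0,\boldsymbol\eta_1,\eta_2,\eta_3)$ in $\mathbb{R}^{n+3}=\mathbb{R}\times\mathbb{R}^n\times\mathbb{R}\times\mathbb{R}$, the Lie product is the nondegenerate symmetric bilinear form $(X\mid Y)=\xi_0\eta_2+\boldsymbol\xi_1\cdot\boldsymbol\eta_1+\xi_2\eta_0-\xi_3\eta_3$. Points of $\mathbb{P}^{n+2}$ are cycles; lowercase letters denote cycles and uppercase letters their homogeneous coordinate vectors; a cycle is proper if $(X\mid X)=0$. For a list $\mathbf X$, $\langle\mathbf X\rangle$ is its span, $\langle\mathbf x\rangle$ the projective subspace, $\langle\mathbf x\rangle^\perp$ the projectivization of $\{Y:(X_i\mid Y)=0\ \forall i\}$, and $\Delta(\mathbf X)=\det[(X_i\mid X_j)]$. The discriminant of $(\mathbf x,y,s)$ is $\delta(\mathbf x,y,s)=\Delta(\mathbf X,Y,S)/(\Delta(\mathbf X,S)\Delta(Y,S))$. (Geometrically: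 the cofamily $\langle\mathbf x,s\rangle^\perp\cap\Omega$ contains a cycle tangent to $y$.) *)

theory Defs
  imports "HOL-Analysis.Analysis"
begin

text \<open>Vectors of R^{n+3} = R x R^n x R x R, with n = CARD('n).\<close>
type_synonym 'n lievec = "real \<times> (real ^ 'n) \<times> real \<times> real"

fun lie :: "'n::finite lievec \<Rightarrow> 'n lievec \<Rightarrow> real" where
  "lie (x0, x1, x2, x3) (y0, y1, y2, y3) = x0 * y2 + x1 \<bullet> y1 + x2 * y0 - x3 * y3"

definition gram_det :: "'n::finite lievec list \<Rightarrow> real" where
  "gram_det Xs = (let m = length Xs in
     \<Sum>p | p permutes {..<m}. of_int (sign p) * (\<Prod>i<m. lie (Xs ! i) (Xs ! (p i))))"

definition discr :: "'n::finite lievec list \<Rightarrow> 'n lievec \<Rightarrow> 'n lievec \<Rightarrow> real" where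
  "discr Xs Y S = gram_det (Xs @ [Y, S]) / (gram_det (Xs @ [S]) * gram_det [Y, S])"

definition proper :: "'n::finite lievec \<Rightarrow> bool" where
  "proper X \<longleftrightarrow> X \<noteq> 0 \<and> lie X X = 0"

end

theory Submission
  imports Defs "Jordan_Normal_Form.Determinant"
begin

text \<open>The Lie form has signature \<open>(n + 1, 2)\<close>; all that is used of this is that no three
  mutually orthogonal vectors can have two negative members and a third nonzero one of
  nonpositive norm. Since \<open>\<Delta>(X, S) < 0\<close>, the space \<open>W = \<langle>X, S\<rangle>\<close> has an orthogonal basis with
  exactly one negative vector \<open>e\<close>. Let \<open>P\<close> be the component of \<open>Y\<close> orthogonal to \<open>W\<close>. Replacing
  \<open>Y\<close> by \<open>P\<close> does not change the Gram determinant, so \<open>\<Delta>(X, Y, S) = (P|P) \<Delta>(X, S)\<close>, and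
  \<open>\<Delta>(Y, S) = -(Y|S)\<^sup>2\<close>; hence \<open>\<delta> \<le> 0\<close> iff \<open>(P|P) \<ge> 0\<close>. A proper \<open>Z \<perp> W\<close> with \<open>(Z|Y) = 0\<close> is
  orthogonal to \<open>e\<close> and \<open>P\<close>, which by the signature bound forces \<open>(P|P) \<ge> 0\<close>. Conversely, if
  \<open>(P|P) = 0\<close> take \<open>Z = P\<close>; if \<open>(P|P) > 0\<close>, then \<open>W \<oplus> \<langle>P\<rangle>\<close> has signature \<open>(k + 1, 1)\<close>, so its
  orthogonal complement has signature \<open>(n - k, 1)\<close> and contains a negative \<open>T\<close> and a positive
  \<open>R \<perp> T\<close>, and \<open>R + t T\<close> is null for a suitable \<open>t\<close>.\<close>

section \<open>The Lie form and its signature\<close>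

lemma lie_commute: "lie x y = lie y x"
  by (cases x; cases y) (auto simp: inner_commute algebra_simps)

lemma lie_add_left: "lie (x + y) z = lie x z + lie y z"
  by (cases x; cases y; cases z) (auto simp: inner_add_left algebra_simps)

lemma lie_scaleR_left: "lie (c *\<^sub>R x) z = c * lie x z"
  by (cases x; cases z) (auto simp: algebra_simps)

lemma linear_lie_left: "linear (\<lambda>x. lie x z)"
  by (rule linearI) (auto simp: lie_add_left lie_scaleR_left)

lemma lie_add_right: "lie z (x + y) = lie z x + lie z y"
  by (simp add: lie_commute[of z] lie_add_left)

lemma lie_scaleR_right: "lie z (c *\<^sub>R x) = c * lie z x"
  by (simp add: lie_commute[of z] lie_scaleR_left)

lemma lie_diff_left: "lie (x - y) z = lie x z - lie y z"
  using linear_diff[OF linear_lie_left] by blast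

lemma lie_diff_right: "lie z (x - y) = lie z x - lie z y"
  by (simp add: lie_commute[of z] lie_diff_left)

lemma lie_zero_left [simp]: "lie 0 z = 0"
  using linear_0[OF linear_lie_left] by blast

lemma lie_zero_right [simp]: "lie z 0 = 0"
  by (simp add: lie_commute[of z])

lemma lie_sum_left: "lie (\<Sum>i\<in>A. f i) z = (\<Sum>i\<in>A. lie (f i) z)"
  using linear_sum[OF linear_lie_left] by blast

lemma lie_sum_right: "lie z (\<Sum>i\<in>A. f i) = (\<Sum>i\<in>A. lie z (f i))"
  by (simp add: lie_commute[of z] lie_sum_left)

lemma lie_orth_span:
  assumes "\<forall>b\<in>B. lie b z = 0" and "x \<in> span B"
  shows "lie x z = 0"
proof -
  have "subspace {x. lie x z = 0}"
    by (auto simp: subspace_def lie_add_left lie_scaleR_left)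
  then show ?thesis
    using assms span_minimal[of B "{x. lie x z = 0}"] by auto
qed

lemma lie_orth_span_iff:
  assumes "span A = span B"
  shows "(\<forall>a\<in>A. lie a z = 0) \<longleftrightarrow> (\<forall>b\<in>B. lie b z = 0)"
  using lie_orth_span[of A z] lie_orth_span[of B z] span_base assms by metis

lemma lie_pos_definite_on_kernel:
  fixes w :: "'n::finite lievec"
  assumes "fst w = fst (snd (snd w))" and "snd (snd (snd w)) = 0" and "lie w w \<le> 0"
  shows "w = 0"
proof -
  obtain a x b d where w: "w = (a, x, b, d)"
    by (cases w)
  with assms have bd: "b = a" "d = 0"
    by auto
  have "lie w w = 2 * a\<^sup>2 + x \<bullet> x"
    using w bd by (simp add: power2_eq_square)
  with assms(3) have "2 * a\<^sup>2 + x \<bullet> x \<le> 0"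
    by simp
  then have "a\<^sup>2 = 0" "x \<bullet> x = 0"
    using zero_le_power2[of a] inner_ge_zero[of x] by linarith+
  then have "a = 0" "x = 0"
    by simp_all
  with w bd show ?thesis
    by (simp add: zero_prod_def)
qed

lemma linear_kernel_nontrivial:
  fixes f :: "'a::euclidean_space \<Rightarrow> 'b::euclidean_space"
  assumes "linear f" and "DIM('b) < DIM('a)"
  obtains x where "x \<noteq> 0" "f x = 0"
proof -
  have "\<not> inj f"
  proof
    assume "inj f"
    then have "dim (f ` UNIV) = dim (UNIV :: 'a set)"
      by (intro dim_image_eq[OF assms(1)]) (simp add: inj_on_subset)
    then have "dim (range f) = DIM('a)"
      by (simp only: dim_UNIV)
    moreover have "dim (range f) \<le> DIM('b)"
      by (rule dim_subset_UNIV)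
    ultimately show False
      using assms(2) by simp
  qed
  then show ?thesis
    using that linear_inj_iff_eq_0[OF assms(1)] by blast
qed

text \<open>The kernel of \<open>w \<mapsto> (w\<^sub>0 - w\<^sub>2, w\<^sub>3)\<close> is positive definite and has codimension 2, so it meets
  the three-dimensional span of \<open>u, v, z\<close>.\<close>

lemma lie_no_negative_orthogonal_triple:
  fixes u v z :: "'n::finite lievec"
  assumes "lie u v = 0" "lie u z = 0" "lie v z = 0"
    and "lie u u < 0" "lie v v < 0" "lie z z \<le> 0"
  shows "z = 0"
proof -
  define \<phi> :: "'n lievec \<Rightarrow> real \<times> real"
    where "\<phi> w = (fst w - fst (snd (snd w)), snd (snd (snd w)))" for w
  define comb :: "real \<times> real \<times> real \<Rightarrow> 'n lievec"
    where "comb = (\<lambda>(a, b, c). a *\<^sub>R u + b *\<^sub>R v + c *\<^sub>R z)"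
  have "linear \<phi>"
    by (rule linearI) (auto simp: \<phi>_def algebra_simps)
  moreover have "linear comb"
    by (rule linearI) (auto simp: comb_def algebra_simps)
  ultimately have "linear (\<lambda>x. \<phi> (comb x))"
    using linear_compose[of comb \<phi>] by (simp add: o_def)
  then obtain abc where "abc \<noteq> 0" "\<phi> (comb abc) = 0"
    using linear_kernel_nontrivial[of "\<lambda>x. \<phi> (comb x)"] by auto
  then obtain a b c where abc: "(a, b, c) \<noteq> 0" and ker: "\<phi> (comb (a, b, c)) = 0"
    by (cases abc) auto
  define w where "w = comb (a, b, c)"
  have lie_w: "lie w y = a * lie u y + b * lie v y + c * lie z y" for y
    by (simp add: w_def comb_def lie_add_left lie_scaleR_left)
  have wu: "lie w u = a * lie u u"
    using lie_w[of u] assms(1,2) by (simp add: lie_commute[of v u] lie_commute[of z u])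
  have wv: "lie w v = b * lie v v"
    using lie_w[of v] assms(1,3) by (simp add: lie_commute[of z v])
  have wz: "lie w z = c * lie z z"
    using lie_w[of z] assms(2,3) by simp
  have "lie w w = a * lie w u + b * lie w v + c * lie w z"
    using lie_w[of w] by (simp add: lie_commute[of u w] lie_commute[of v w] lie_commute[of z w])
  also have "\<dots> = a\<^sup>2 * lie u u + b\<^sup>2 * lie v v + c\<^sup>2 * lie z z"
    by (simp add: wu wv wz power2_eq_square)
  also have "\<dots> \<le> 0"
    using assms(4-6) by (intro add_nonpos_nonpos mult_nonneg_nonpos) auto
  finally have "w = 0"
    using ker by (intro lie_pos_definite_on_kernel) (auto simp: \<phi>_def w_def zero_prod_def)
  with wu wv assms(4,5) have "a = 0" "b = 0"
    by auto
  with abc have "c \<noteq> 0"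
    by (simp add: zero_prod_def)
  moreover have "c *\<^sub>R z = 0"
    using \<open>w = 0\<close> \<open>a = 0\<close> \<open>b = 0\<close> by (simp add: w_def comb_def)
  ultimately show ?thesis
    by simp
qed

text \<open>The witness is a combination of the orthogonal negative vectors \<open>(1, 0, -1, 0)\<close> and
  \<open>(0, 0, 0, 1)\<close>.\<close>

lemma exists_lie_negative_orth:
  fixes e :: "'n::finite lievec"
  obtains x where "lie x e = 0" "lie x x < 0"
proof -
  obtain e0 e1 e2 e3 where e: "e = (e0, e1, e2, e3)"
    by (cases e)
  show ?thesis
  proof (cases "e3 = 0 \<and> e2 = e0")
    case True
    then show ?thesis
      using that[of "(1, 0, -1, 0)"] e by simp
  next
    case False
    let ?x = "(e3, 0, -e3, e2 - e0) :: 'n lievec"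
    have "lie ?x ?x = - 2 * e3\<^sup>2 - (e2 - e0)\<^sup>2"
      by (simp add: power2_eq_square algebra_simps)
    also have "\<dots> < 0"
    proof -
      have "e3\<^sup>2 > 0 \<or> (e2 - e0)\<^sup>2 > 0"
        using False by auto
      then show ?thesis
        using zero_le_power2[of e3] zero_le_power2[of "e2 - e0"] by linarith
    qed
    finally show ?thesis
      using that[of ?x] e by (simp add: algebra_simps)
  qed
qed

section \<open>Orthogonal frames and projections\<close>

definition lie_orthogonal_set :: "'n::finite lievec set \<Rightarrow> bool" where
  "lie_orthogonal_set F \<longleftrightarrow> (\<forall>x\<in>F. \<forall>y\<in>F. x \<noteq> y \<longrightarrow> lie x y = 0)"

definition lie_orthogonal_frame :: "'n::finite lievec set \<Rightarrow> bool" where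
  "lie_orthogonal_frame F \<longleftrightarrow> finite F \<and> lie_orthogonal_set F \<and> (\<forall>b\<in>F. lie b b \<noteq> 0)"

lemma lie_orthogonal_frame_insert:
  assumes "lie_orthogonal_frame F" and "\<forall>b\<in>F. lie b a = 0" and "lie a a \<noteq> 0"
  shows "lie_orthogonal_frame (insert a F)"
proof -
  have "\<forall>b\<in>F. lie a b = 0"
    using assms(2) lie_commute by metis
  with assms show ?thesis
    unfolding lie_orthogonal_frame_def lie_orthogonal_set_def by auto
qed

lemma span_insert_residuals:
  fixes B :: "'a::real_vector set"
  assumes "a \<in> span B" and "b \<in> B" and "b \<in> span (insert a (B - {b}))"
  shows "span (insert a ((\<lambda>v. v - r v *\<^sub>R a) ` (B - {b}))) = span B"
  unfolding span_eq
proof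
  show "insert a ((\<lambda>v. v - r v *\<^sub>R a) ` (B - {b})) \<subseteq> span B"
    using assms(1) by (auto intro: span_diff span_scale span_base)
  let ?V = "span (insert a ((\<lambda>v. v - r v *\<^sub>R a) ` (B - {b})))"
  have in_V: "v \<in> ?V" if "v \<in> insert a (B - {b})" for v
  proof (cases "v = a")
    case False
    with that have "v - r v *\<^sub>R a \<in> ?V" "r v *\<^sub>R a \<in> ?V"
      by (auto intro: span_base span_scale)
    then show ?thesis
      using span_add by fastforce
  qed (auto intro: span_base)
  then have "span (insert a (B - {b})) \<subseteq> ?V"
    by (meson span_minimal subspace_span subsetI)
  with assms(3) in_V show "B \<subseteq> ?V"
    by blast
qed

lemma exists_anisotropic_exchange:
  assumes "x \<in> B" and "y \<in> B" and "lie x y \<noteq> 0"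
  obtains a b where "b \<in> B" "a \<in> span B" "b \<in> span (insert a (B - {b}))" "lie a a \<noteq> 0"
proof -
  consider "lie x x \<noteq> 0" | "lie y y \<noteq> 0" | "lie x x = 0" "lie y y = 0"
    by blast
  then show ?thesis
  proof cases
    case 1
    then show ?thesis
      using that[of x x] assms(1) by (auto intro: span_base)
  next
    case 2
    then show ?thesis
      using that[of y y] assms(2) by (auto intro: span_base)
  next
    case 3
    \<comment> \<open>\<open>x\<close> and \<open>y\<close> are isotropic but not orthogonal, so \<open>x + y\<close> is anisotropic\<close>
    then have "x \<noteq> y" "lie (x + y) (x + y) = 2 * lie x y"
      using assms(3) by (auto simp: lie_add_left lie_add_right lie_commute[of y x])
    moreover have "x + y \<in> span B"
      using assms(1,2) by (auto intro: span_add span_base)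
    moreover have "x \<in> span (insert (x + y) (B - {x}))"
    proof -
      have "(x + y) - y \<in> span (insert (x + y) (B - {x}))"
        using assms(2) \<open>x \<noteq> y\<close> by (intro span_diff) (auto intro: span_base)
      then show ?thesis
        by simp
    qed
    ultimately show ?thesis
      using that[of x "x + y"] assms by auto
  qed
qed

lemma exists_lie_orthogonal_spanning_set:
  fixes B :: "'n::finite lievec set"
  assumes "finite B"
  shows "\<exists>E. finite E \<and> card E \<le> card B \<and> span E = span B \<and> lie_orthogonal_set E"
  using assms
proof (induction "card B" arbitrary: B rule: less_induct)
  case less
  show ?case
  proof (cases "\<exists>x\<in>B. \<exists>y\<in>B. lie x y \<noteq> 0")
    case False
    then show ?thesis
      using less.prems by (auto simp: lie_orthogonal_set_def)
  next
    case True
    then obtain a b where ab: "b \<in> B" "a \<in> span B" "b \<in> span (insert a (B - {b}))" "lie a a \<noteq> 0"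
      using exists_anisotropic_exchange by metis
    define B' where "B' = (\<lambda>v. v - (lie v a / lie a a) *\<^sub>R a) ` (B - {b})"
    have "card B' \<le> card (B - {b})"
      unfolding B'_def using less.prems by (simp add: card_image_le)
    then have "card B' < card B"
      using card_Diff1_less[OF less.prems ab(1)] by linarith
    then obtain E' where E': "finite E'" "card E' \<le> card B'" "span E' = span B'"
        "lie_orthogonal_set E'"
      using less.hyps less.prems unfolding B'_def by blast
    have "lie v a = 0" if "v \<in> B'" for v
      using that ab(4) unfolding B'_def by (auto simp: lie_diff_left lie_scaleR_left)
    then have E'a: "lie e a = 0" if "e \<in> E'" for e
      using lie_orth_span[of B' a e] that E'(3) span_base by blast
    have "span (insert a E') = span B"
      using span_insert_residuals[OF ab(2,1,3)] E'(3)
      unfolding B'_def by (simp add: span_insert)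
    moreover have "lie_orthogonal_set (insert a E')"
    proof -
      have "lie a e = 0" if "e \<in> E'" for e
        using E'a[OF that] lie_commute[of a e] by simp
      with E'(4) E'a show ?thesis
        unfolding lie_orthogonal_set_def by auto
    qed
    moreover have "card (insert a E') \<le> card B"
      using E'(1,2) \<open>card B' < card B\<close> by (simp add: card_insert_if)
    ultimately show ?thesis
      using E'(1) by blast
  qed
qed

definition lie_proj :: "'n::finite lievec set \<Rightarrow> 'n lievec \<Rightarrow> 'n lievec" where
  "lie_proj F x = (\<Sum>b\<in>F. (lie x b / lie b b) *\<^sub>R b)"

lemma lie_proj_in_span: "lie_proj F x \<in> span F"
  unfolding lie_proj_def by (intro span_sum span_scale span_base)

lemma lie_proj_lie:
  assumes "lie_orthogonal_frame F" and "b \<in> F"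
  shows "lie (lie_proj F x) b = lie x b"
proof -
  have fin: "finite F" and orth: "lie_orthogonal_set F" and nz: "lie b b \<noteq> 0"
    using assms unfolding lie_orthogonal_frame_def by auto
  have "lie (lie_proj F x) b = (\<Sum>c\<in>F. (lie x c / lie c c) * lie c b)"
    unfolding lie_proj_def by (simp add: lie_sum_left lie_scaleR_left)
  also have "\<dots> = (lie x b / lie b b) * lie b b + (\<Sum>c\<in>F - {b}. (lie x c / lie c c) * lie c b)"
    using fin assms(2) by (simp add: sum.remove)
  also have "(\<Sum>c\<in>F - {b}. (lie x c / lie c c) * lie c b) = 0"
    using orth assms(2) unfolding lie_orthogonal_set_def by (intro sum.neutral) auto
  finally show ?thesis
    using nz by simp
qed

lemma lie_orth_residual:
  assumes "lie_orthogonal_frame F" and "v \<in> span F"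
  shows "lie v (x - lie_proj F x) = 0"
proof -
  have "\<forall>b\<in>F. lie b (x - lie_proj F x) = 0"
  proof
    fix b
    assume "b \<in> F"
    then show "lie b (x - lie_proj F x) = 0"
      using lie_proj_lie[OF assms(1)]
      by (simp add: lie_diff_right lie_commute[of b x] lie_commute[of b "lie_proj F x"])
  qed
  then show ?thesis
    using lie_orth_span assms(2) by blast
qed

lemma lie_proj_norm:
  assumes "lie_orthogonal_frame F"
  shows "lie (lie_proj F x) (lie_proj F x) = (\<Sum>b\<in>F. (lie x b)\<^sup>2 / lie b b)"
proof -
  have "lie (lie_proj F x) (x - lie_proj F x) = 0"
    using lie_orth_residual[OF assms lie_proj_in_span] .
  then have "lie (lie_proj F x) (lie_proj F x) = lie (lie_proj F x) x"
    by (simp add: lie_diff_right)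
  also have "\<dots> = (\<Sum>b\<in>F. (lie x b / lie b b) * lie b x)"
    unfolding lie_proj_def by (simp add: lie_sum_left lie_scaleR_left)
  also have "\<dots> = (\<Sum>b\<in>F. (lie x b)\<^sup>2 / lie b b)"
  proof (rule sum.cong)
    fix b
    show "(lie x b / lie b b) * lie b x = (lie x b)\<^sup>2 / lie b b"
      by (simp add: lie_commute[of b x] power2_eq_square)
  qed simp
  finally show ?thesis .
qed

lemma lie_norm_proj_split:
  assumes "lie_orthogonal_frame F"
  shows "lie x x = lie (lie_proj F x) (lie_proj F x) + lie (x - lie_proj F x) (x - lie_proj F x)"
proof -
  let ?p = "lie_proj F x"
  have "lie ?p (x - ?p) = 0"
    using lie_orth_residual[OF assms lie_proj_in_span] .
  moreover have "lie x x = lie (?p + (x - ?p)) (?p + (x - ?p))"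
    by simp
  ultimately show ?thesis
    unfolding lie_add_left lie_add_right by (simp add: lie_commute[of "x - ?p" ?p])
qed

section \<open>Gram determinants\<close>

definition lie_gram_mat :: "'n::finite lievec list \<Rightarrow> real Matrix.mat" where
  "lie_gram_mat L = Matrix.mat (length L) (length L) (\<lambda>(i, j). lie (L ! i) (L ! j))"

lemma lie_gram_mat_carrier: "lie_gram_mat L \<in> carrier_mat (length L) (length L)"
  unfolding lie_gram_mat_def by simp

lemma gram_det_eq_det: "gram_det L = Determinant.det (lie_gram_mat L)"
proof -
  let ?m = "length L"
  have "gram_det L = (\<Sum>p | p permutes {0..<?m}.
      of_int (sign p) * (\<Prod>i = 0..<?m. lie (L ! i) (L ! (p i))))"
    unfolding gram_det_def Let_def by (simp add: atLeast0LessThan)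
  also have "\<dots> = (\<Sum>p | p permutes {0..<?m}.
      of_int (sign p) * (\<Prod>i = 0..<?m. lie_gram_mat L $$ (i, p i)))"
  proof (intro sum.cong refl arg_cong2[where f = "(*)"] prod.cong)
    fix p i
    assume "p \<in> {p. p permutes {0..<?m}}" "i \<in> {0..<?m}"
    then have "p i < ?m" "i < ?m"
      using permutes_in_image by fastforce+
    then show "lie (L ! i) (L ! (p i)) = lie_gram_mat L $$ (i, p i)"
      unfolding lie_gram_mat_def by simp
  qed
  also have "\<dots> = Determinant.det (lie_gram_mat L)"
    unfolding Determinant.det_def by (simp add: lie_gram_mat_def)
  finally show ?thesis .
qed

lemma gram_det_change_basis:
  assumes "length L = m" and "length E = m"
    and "\<forall>i<m. L ! i = (\<Sum>j<m. C i j *\<^sub>R E ! j)"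
  shows "gram_det L = (Determinant.det (Matrix.mat m m (\<lambda>(i, j). C i j)))\<^sup>2 * gram_det E"
proof -
  define Cm where "Cm = Matrix.mat m m (\<lambda>(i, j). C i j)"
  have Cm: "Cm \<in> carrier_mat m m"
    unfolding Cm_def by simp
  have G: "lie_gram_mat E \<in> carrier_mat m m"
    using lie_gram_mat_carrier[of E] assms(2) by simp
  have "lie_gram_mat L = Cm * lie_gram_mat E * Cm\<^sup>T"
  proof (rule eq_matI)
    fix i k
    assume "i < dim_row (Cm * lie_gram_mat E * Cm\<^sup>T)" "k < dim_col (Cm * lie_gram_mat E * Cm\<^sup>T)"
    then have ik: "i < m" "k < m"
      by (simp_all add: Cm_def)
    have "(Cm * lie_gram_mat E * Cm\<^sup>T) $$ (i, k)
        = (\<Sum>l<m. (\<Sum>j<m. C i j * lie (E ! j) (E ! l)) * C k l)"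
      using ik assms(2) by (simp add: Cm_def lie_gram_mat_def scalar_prod_def atLeast0LessThan)
    also have "\<dots> = (\<Sum>l<m. \<Sum>j<m. C i j * (C k l * lie (E ! j) (E ! l)))"
      by (simp add: sum_distrib_left sum_distrib_right mult_ac)
    also have "\<dots> = (\<Sum>j<m. C i j * (\<Sum>l<m. C k l * lie (E ! j) (E ! l)))"
      by (subst sum.swap) (simp add: sum_distrib_left)
    also have "\<dots> = lie (L ! i) (L ! k)"
    proof -
      have "lie (L ! i) (L ! k) = (\<Sum>j<m. C i j * lie (E ! j) (L ! k))"
        by (subst assms(3)[rule_format, OF ik(1)]) (simp add: lie_sum_left lie_scaleR_left)
      also have "\<dots> = (\<Sum>j<m. C i j * (\<Sum>l<m. C k l * lie (E ! j) (E ! l)))"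
        by (subst assms(3)[rule_format, OF ik(2)]) (simp add: lie_sum_right lie_scaleR_right)
      finally show ?thesis ..
    qed
    also have "\<dots> = lie_gram_mat L $$ (i, k)"
      using ik assms(1) by (simp add: lie_gram_mat_def)
    finally show "lie_gram_mat L $$ (i, k) = (Cm * lie_gram_mat E * Cm\<^sup>T) $$ (i, k)"
      by simp
  qed (use assms(1) in \<open>simp_all add: lie_gram_mat_def Cm_def\<close>)
  then have "gram_det L = Determinant.det Cm * Determinant.det (lie_gram_mat E) * Determinant.det Cm\<^sup>T"
    using Cm G by (simp add: gram_det_eq_det det_mult[of _ m])
  then show ?thesis
    unfolding Cm_def[symmetric] by (simp add: det_transpose[OF Cm] gram_det_eq_det power2_eq_square)
qed

lemma gram_det_orthogonal:
  assumes "distinct L" and "lie_orthogonal_set (set L)"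
  shows "gram_det L = (\<Prod>b\<in>set L. lie b b)"
proof -
  have "upper_triangular (lie_gram_mat L)"
    using assms nth_eq_iff_index_eq
    unfolding upper_triangular_def lie_gram_mat_def lie_orthogonal_set_def by fastforce
  then have "Determinant.det (lie_gram_mat L) = prod_list (diag_mat (lie_gram_mat L))"
    using det_upper_triangular lie_gram_mat_carrier by blast
  also have "\<dots> = prod_list (map (\<lambda>b. lie b b) L)"
    unfolding diag_mat_def lie_gram_mat_def by (intro arg_cong[where f = prod_list] nth_equalityI) auto
  also have "\<dots> = (\<Prod>b\<in>set L. lie b b)"
    using assms(1) by (rule prod.distinct_set_conv_list[symmetric])
  finally show ?thesis
    by (simp add: gram_det_eq_det)
qed

lemma det_isolated_row:
  fixes A :: "'a::comm_ring_1 Matrix.mat"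
  assumes "A \<in> carrier_mat n n" and "i < n" and "\<forall>j<n. j \<noteq> i \<longrightarrow> A $$ (i, j) = 0"
  shows "Determinant.det A = A $$ (i, i) * Determinant.det (mat_delete A i i)"
proof -
  have "Determinant.det A = (\<Sum>j<n. A $$ (i, j) * cofactor A i j)"
    using laplace_expansion_row[OF assms(1,2)] .
  also have "\<dots> = A $$ (i, i) * cofactor A i i"
    using assms(2,3) by (subst sum.remove[of _ i]) (auto intro: sum.neutral)
  finally show ?thesis
    by (simp add: cofactor_def flip: mult_2 add: power_mult)
qed

lemma det_identity_except_row:
  fixes A :: "'a::comm_ring_1 Matrix.mat"
  assumes "A \<in> carrier_mat n n" and "i < n" and "A $$ (i, i) = 1"
    and "\<forall>j<n. \<forall>l<n. j \<noteq> i \<longrightarrow> A $$ (j, l) = (if j = l then 1 else 0)"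
  shows "Determinant.det A = 1"
proof -
  have "mat_delete A\<^sup>T i i = 1\<^sub>m (n - 1)"
    using assms(1,4) by (intro eq_matI) (auto simp: mat_delete_def)
  moreover have "Determinant.det A\<^sup>T = A\<^sup>T $$ (i, i) * Determinant.det (mat_delete A\<^sup>T i i)"
    using assms by (intro det_isolated_row) auto
  ultimately show ?thesis
    using assms(1-3) by (simp add: det_transpose)
qed

lemma nth_append_Cons_insert_index:
  "(Xs @ P # Ys) ! insert_index (length Xs) j = (Xs @ Ys) ! j"
  by (auto simp: insert_index_def nth_append nth_Cons' Suc_diff_le)

lemma bij_betw_insert_index:
  assumes "k \<le> m"
  shows "bij_betw (insert_index k) {..<m} ({..<Suc m} - {k})"
  by (rule bij_betw_byWitness[where f' = "delete_index k"])
    (use assms in \<open>auto simp: insert_index_def delete_index_def\<close>)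

lemma gram_det_insert_orth:
  assumes "\<forall>v\<in>set (Xs @ Ys). lie P v = 0"
  shows "gram_det (Xs @ P # Ys) = lie P P * gram_det (Xs @ Ys)"
proof -
  let ?k = "length Xs" and ?L = "Xs @ P # Ys"
  let ?A = "lie_gram_mat ?L"
  have "\<forall>j<length ?L. j \<noteq> ?k \<longrightarrow> ?A $$ (?k, j) = 0"
  proof (intro allI impI)
    fix j
    assume j: "j < length ?L" "j \<noteq> ?k"
    then have "?L ! j = (Xs @ Ys) ! delete_index ?k j"
      using nth_append_Cons_insert_index insert_delete_index by metis
    moreover have "delete_index ?k j < length (Xs @ Ys)"
      using j by (auto simp: delete_index_def)
    ultimately show "?A $$ (?k, j) = 0"
      using j assms by (simp add: lie_gram_mat_def nth_append)
  qed
  then have "Determinant.det ?A = ?A $$ (?k, ?k) * Determinant.det (mat_delete ?A ?k ?k)"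
    by (intro det_isolated_row[OF lie_gram_mat_carrier]) auto
  moreover have "mat_delete ?A ?k ?k = lie_gram_mat (Xs @ Ys)"
    by (rule eq_matI) (auto simp: mat_delete_def lie_gram_mat_def
        nth_append_Cons_insert_index[unfolded insert_index_def])
  ultimately show ?thesis
    by (simp add: gram_det_eq_det lie_gram_mat_def nth_append)
qed

lemma span_list_coeffs:
  assumes "distinct E" and "x \<in> span (set E)"
  obtains c where "x = (\<Sum>j<length E. c j *\<^sub>R E ! j)"
proof -
  obtain u where "x = (\<Sum>v\<in>set E. u v *\<^sub>R v)"
    using assms(2) span_finite[of "set E"] by auto
  also have "\<dots> = sum_list (map (\<lambda>v. u v *\<^sub>R v) E)"
    using assms(1) by (rule sum.distinct_set_conv_list)
  also have "\<dots> = (\<Sum>j<length E. u (E ! j) *\<^sub>R E ! j)"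
    by (simp add: sum_list_sum_nth atLeast0LessThan)
  finally show ?thesis
    by (rule that)
qed

lemma span_list_coeff_matrix:
  assumes "distinct E" and "set L \<subseteq> span (set E)"
  obtains C where "\<forall>i<length L. L ! i = (\<Sum>j<length E. C i j *\<^sub>R E ! j)"
proof -
  have "\<exists>c. i < length L \<longrightarrow> L ! i = (\<Sum>j<length E. c j *\<^sub>R E ! j)" for i
  proof (cases "i < length L")
    case True
    then have "L ! i \<in> span (set E)"
      using assms(2) nth_mem by blast
    then obtain c where "L ! i = (\<Sum>j<length E. c j *\<^sub>R E ! j)"
      by (rule span_list_coeffs[OF assms(1)])
    then show ?thesis
      by blast
  qed simp
  then have "\<exists>C. \<forall>i. i < length L \<longrightarrow> L ! i = (\<Sum>j<length E. C i j *\<^sub>R E ! j)"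
    using choice[of "\<lambda>i c. i < length L \<longrightarrow> L ! i = (\<Sum>j<length E. c j *\<^sub>R E ! j)"] by blast
  then show ?thesis
    using that by blast
qed

lemma gram_det_add_span:
  assumes "distinct (Xs @ Ys)" and "Y - P \<in> span (set (Xs @ Ys))"
  shows "gram_det (Xs @ Y # Ys) = gram_det (Xs @ P # Ys)"
proof -
  let ?k = "length Xs" and ?m = "length (Xs @ Ys)" and ?L = "Xs @ P # Ys"
  obtain c where c: "Y - P = (\<Sum>j<?m. c j *\<^sub>R (Xs @ Ys) ! j)"
    using span_list_coeffs[OF assms] by blast
  define C where "C i j = (if i = ?k then (if j = ?k then 1 else c (delete_index ?k j))
      else if i = j then 1 else 0)" for i j
  have "(Xs @ Y # Ys) ! i = (\<Sum>j<Suc ?m. C i j *\<^sub>R ?L ! j)" if "i < Suc ?m" for i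
  proof (cases "i = ?k")
    case True
    have "(\<Sum>j<Suc ?m. C i j *\<^sub>R ?L ! j) = P + (\<Sum>j\<in>{..<Suc ?m} - {?k}. C i j *\<^sub>R ?L ! j)"
      using True by (subst sum.remove[of _ ?k]) (auto simp: C_def)
    also have "(\<Sum>j\<in>{..<Suc ?m} - {?k}. C i j *\<^sub>R ?L ! j)
        = (\<Sum>j<?m. C i (insert_index ?k j) *\<^sub>R ?L ! insert_index ?k j)"
      using sum.reindex_bij_betw[OF bij_betw_insert_index, of ?k ?m "\<lambda>j. C i j *\<^sub>R ?L ! j"]
      by simp
    also have "\<dots> = Y - P"
    proof -
      have "insert_index ?k j \<noteq> ?k" for j
        by (simp add: insert_index_def)
      then show ?thesis
        using True by (simp add: c C_def nth_append_Cons_insert_index)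
    qed
    finally show ?thesis
      using True by (simp add: nth_append)
  next
    case False
    have "(\<Sum>j<Suc ?m. C i j *\<^sub>R ?L ! j) = (\<Sum>j<Suc ?m. if j = i then ?L ! j else 0)"
      using False by (intro sum.cong) (auto simp: C_def)
    with False that show ?thesis
      by (cases "i < ?k") (auto simp: nth_append nth_Cons')
  qed
  then have "gram_det (Xs @ Y # Ys)
      = (Determinant.det (Matrix.mat (Suc ?m) (Suc ?m) (\<lambda>(i, j). C i j)))\<^sup>2 * gram_det ?L"
    by (intro gram_det_change_basis) auto
  moreover have "Determinant.det (Matrix.mat (Suc ?m) (Suc ?m) (\<lambda>(i, j). C i j)) = 1"
    by (rule det_identity_except_row[of _ _ ?k]) (auto simp: C_def)
  ultimately show ?thesis
    by simp
qed

lemma gram_det_pair: "gram_det [Y, S] = lie Y Y * lie S S - (lie Y S)\<^sup>2"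
proof -
  let ?A = "lie_gram_mat [Y, S]"
  have A: "?A \<in> carrier_mat 2 2"
    using lie_gram_mat_carrier[of "[Y, S]"] by (simp add: numeral_2_eq_2)
  have "Determinant.det ?A = ?A $$ (0, 0) * cofactor ?A 0 0 + ?A $$ (0, 1) * cofactor ?A 0 1"
    using laplace_expansion_row[OF A, of 0] by (simp add: numeral_2_eq_2)
  also have "cofactor ?A 0 0 = lie S S"
    unfolding cofactor_def by (subst det_single) (auto simp: mat_delete_def lie_gram_mat_def)
  also have "cofactor ?A 0 1 = - lie S Y"
    unfolding cofactor_def by (subst det_single) (auto simp: mat_delete_def lie_gram_mat_def)
  finally show ?thesis
    by (simp add: gram_det_eq_det lie_gram_mat_def lie_commute[of S Y] power2_eq_square)
qed

lemma discr_nonpos_iff: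
  assumes "distinct (Xs @ [S])" and "Y - P \<in> span (set (Xs @ [S]))"
    and "\<forall>v\<in>set (Xs @ [S]). lie v P = 0"
    and "lie Y Y = 0" and "lie Y S \<noteq> 0" and "gram_det (Xs @ [S]) < 0"
  shows "discr Xs Y S \<le> 0 \<longleftrightarrow> 0 \<le> lie P P"
proof -
  have "\<forall>v\<in>set (Xs @ [S]). lie P v = 0"
    using assms(3) lie_commute by metis
  have "gram_det (Xs @ [Y, S]) = gram_det (Xs @ P # [S])"
    using gram_det_add_span[OF assms(1,2)] by simp
  also have "\<dots> = lie P P * gram_det (Xs @ [S])"
    using gram_det_insert_orth \<open>\<forall>v\<in>set (Xs @ [S]). lie P v = 0\<close> by blast
  finally have "discr Xs Y S = - lie P P / (lie Y S)\<^sup>2"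
    using assms(4,6) by (simp add: discr_def gram_det_pair)
  then show ?thesis
    using assms(5) by (simp add: zero_le_divide_iff)
qed

lemma lie_orthogonal_frame_of_negative_gram:
  fixes L :: "'n::finite lievec list"
  assumes "distinct L" and "independent (set L)" and "gram_det L < 0"
  obtains E where "lie_orthogonal_frame E" "span E = span (set L)" "card E = length L"
    "(\<Prod>b\<in>E. lie b b) < 0"
proof -
  let ?m = "length L"
  obtain E where E: "finite E" "card E \<le> ?m" "span E = span (set L)" "lie_orthogonal_set E"
    using exists_lie_orthogonal_spanning_set[of "set L"] distinct_card[OF assms(1)] by auto
  have "?m = dim (set L)"
    using dim_eq_card_independent[OF assms(2)] distinct_card[OF assms(1)] by simp
  also have "\<dots> = dim E"
    using E(3) dim_span[of E] dim_span[of "set L"] by simp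
  also have "\<dots> \<le> card E"
    using E(1) by (rule dim_le_card')
  finally have cE: "card E = ?m"
    using E(2) by simp
  obtain El where El: "set El = E" "distinct El"
    using finite_distinct_list[OF E(1)] by blast
  then have lEl: "length El = ?m"
    using distinct_card[OF El(2)] cE by simp
  have "set L \<subseteq> span (set El)"
    using E(3) El(1) span_superset[of "set L"] by simp
  then obtain C where "\<forall>i<?m. L ! i = (\<Sum>j<length El. C i j *\<^sub>R El ! j)"
    by (rule span_list_coeff_matrix[OF El(2)])
  note C = this[unfolded lEl]
  have "gram_det L = (Determinant.det (Matrix.mat ?m ?m (\<lambda>(i, j). C i j)))\<^sup>2 * gram_det El"
    using gram_det_change_basis[OF refl lEl C] .
  moreover have "gram_det El = (\<Prod>b\<in>E. lie b b)"
    using gram_det_orthogonal[OF El(2)] El(1) E(4) by simp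
  ultimately have neg: "(\<Prod>b\<in>E. lie b b) < 0"
    using assms(3) mult_nonneg_nonneg[OF zero_le_power2] by (metis not_le)
  then have "\<forall>b\<in>E. lie b b \<noteq> 0"
    using prod_zero[OF E(1), of "\<lambda>b. lie b b"] by force
  with E cE neg show ?thesis
    using that unfolding lie_orthogonal_frame_def by blast
qed

lemma lie_orthogonal_unique_negative:
  assumes "finite F" and "lie_orthogonal_set F" and "(\<Prod>b\<in>F. lie b b) < 0"
  obtains e where "e \<in> F" "lie e e < 0" "\<forall>b\<in>F - {e}. lie b b > 0"
proof -
  have nz: "lie b b \<noteq> 0" if "b \<in> F" for b
    using prod_zero[OF assms(1), of "\<lambda>b. lie b b"] assms(3) that by force
  obtain e where e: "e \<in> F" "lie e e < 0"
    using assms(3) prod_nonneg[of F "\<lambda>b. lie b b"] by (meson not_le)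
  have "lie b b > 0" if b: "b \<in> F - {e}" for b
  proof (rule ccontr)
    assume "\<not> lie b b > 0"
    moreover have "lie b b \<noteq> 0"
      using nz b by blast
    ultimately have b_neg: "lie b b < 0"
      by linarith
    have "lie c c > 0" if c: "c \<in> F - {e} - {b}" for c
    proof (rule ccontr)
      assume "\<not> lie c c > 0"
      with c b e assms(2) have "c = 0"
        by (intro lie_no_negative_orthogonal_triple[of e b c] b_neg)
          (auto simp: lie_orthogonal_set_def)
      with nz c show False
        by (metis DiffD1 lie_zero_left)
    qed
    then have rest: "(\<Prod>c\<in>F - {e} - {b}. lie c c) > 0"
      by (rule prod_pos)
    have eb: "lie e e * lie b b > 0"
      using e(2) b_neg by (simp add: mult_neg_neg)
    have "(\<Prod>c\<in>F. lie c c) = lie e e * lie b b * (\<Prod>c\<in>F - {e} - {b}. lie c c)"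
      using assms(1) e(1) b by (simp add: prod.remove mult.assoc)
    also have "\<dots> > 0"
      using mult_pos_pos[OF eb rest] .
    finally show False
      using assms(3) by simp
  qed
  with e that show ?thesis
    by blast
qed

section \<open>Null vectors orthogonal to a frame\<close>

lemma exists_negative_orth_frame:
  assumes "lie_orthogonal_frame F" and "e \<in> F" and "\<forall>b\<in>F - {e}. lie b b > 0"
  obtains T where "\<forall>b\<in>F. lie b T = 0" "lie T T < 0"
proof -
  obtain x where x: "lie x e = 0" "lie x x < 0"
    by (rule exists_lie_negative_orth)
  have "(lie x b)\<^sup>2 / lie b b \<ge> 0" if "b \<in> F" for b
  proof (cases "b = e")
    case True
    then show ?thesis
      using x(1) by simp
  next
    case False
    then have "lie b b > 0"
      using assms(3) that by blast
    then show ?thesis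
      by simp
  qed
  then have "lie (lie_proj F x) (lie_proj F x) \<ge> 0"
    unfolding lie_proj_norm[OF assms(1)] by (rule sum_nonneg)
  then have "lie (x - lie_proj F x) (x - lie_proj F x) < 0"
    using lie_norm_proj_split[OF assms(1), of x] x(2) by linarith
  moreover have "\<forall>b\<in>F. lie b (x - lie_proj F x) = 0"
    using lie_orth_residual[OF assms(1)] span_base by blast
  ultimately show ?thesis
    using that by blast
qed

lemma exists_nonzero_orth_frame:
  fixes F :: "'n::finite lievec set"
  assumes "lie_orthogonal_frame F" and "card F < CARD('n) + 3"
  obtains R where "R \<noteq> 0" "\<forall>b\<in>F. lie b R = 0"
proof -
  have "dim F \<le> card F"
    using assms(1) by (intro dim_le_card') (simp add: lie_orthogonal_frame_def)
  moreover have "DIM('n lievec) = CARD('n) + 3"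
    by (simp add: DIM_cart)
  ultimately have "dim F \<noteq> DIM('n lievec)"
    using assms(2) by linarith
  then obtain y where y: "y \<notin> span F"
    using dim_eq_full[of F] by auto
  then have "y - lie_proj F y \<noteq> 0"
    using lie_proj_in_span[of F y] by auto
  moreover have "\<forall>b\<in>F. lie b (y - lie_proj F y) = 0"
    using lie_orth_residual[OF assms(1)] span_base by blast
  ultimately show ?thesis
    using that by blast
qed

text \<open>A nonzero \<open>R\<close> orthogonal to \<open>F\<close> and to a negative \<open>T \<perp> F\<close> is positive, as \<open>e\<close> and \<open>T\<close>
  already span a negative plane; then \<open>R + t T\<close> is null for a suitable \<open>t\<close>.\<close>

lemma exists_null_orth_frame:
  fixes F :: "'n::finite lievec set"
  assumes "lie_orthogonal_frame F" and "e \<in> F" and "lie e e < 0"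
    and "\<forall>b\<in>F - {e}. lie b b > 0" and "card F \<le> CARD('n) + 1"
  obtains Z where "proper Z" "\<forall>b\<in>F. lie b Z = 0"
proof -
  obtain T where T: "\<forall>b\<in>F. lie b T = 0" "lie T T < 0"
    using exists_negative_orth_frame[OF assms(1,2,4)] by blast
  let ?F = "insert T F"
  have "lie_orthogonal_frame ?F"
    using T by (intro lie_orthogonal_frame_insert[OF assms(1)]) auto
  moreover have "card ?F < CARD('n) + 3"
    using assms(1,5) by (simp add: lie_orthogonal_frame_def card_insert_if)
  ultimately obtain R where R: "R \<noteq> 0" "\<forall>b\<in>?F. lie b R = 0"
    by (rule exists_nonzero_orth_frame)
  have "lie R R > 0"
  proof (rule ccontr)
    assume "\<not> lie R R > 0"
    with R assms(2,3) T(1) T(2) show False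
      using lie_no_negative_orthogonal_triple[of e T R] by auto
  qed
  define t where "t = sqrt (lie R R / - lie T T)"
  have "t\<^sup>2 = lie R R / - lie T T"
    unfolding t_def using \<open>lie R R > 0\<close> T(2) by (simp add: divide_nonneg_neg)
  define Z where "Z = R + t *\<^sub>R T"
  have RT: "lie R T = 0" "lie T R = 0"
    using R(2) lie_commute[of R T] by auto
  have "lie Z Z = lie R R + t\<^sup>2 * lie T T"
    unfolding Z_def by (simp add: lie_add_left lie_add_right lie_scaleR_left lie_scaleR_right
        RT power2_eq_square)
  then have "lie Z Z = 0"
    using \<open>t\<^sup>2 = lie R R / - lie T T\<close> T(2) by simp
  moreover have "lie Z R = lie R R"
    unfolding Z_def by (simp add: lie_add_left lie_scaleR_left RT)
  then have "Z \<noteq> 0"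
    using \<open>lie R R > 0\<close> by auto
  moreover have "\<forall>b\<in>F. lie b Z = 0"
    using R(2) T(1) by (simp add: Z_def lie_add_right lie_scaleR_right)
  ultimately show ?thesis
    using that unfolding proper_def by blast
qed

lemma exists_null_orth_frame_vector:
  fixes F :: "'n::finite lievec set"
  assumes "lie_orthogonal_frame F" and "e \<in> F" and "lie e e < 0"
    and "\<forall>b\<in>F - {e}. lie b b > 0" and "card F \<le> CARD('n)"
    and "\<forall>b\<in>F. lie b P = 0" and "P \<noteq> 0" and "0 \<le> lie P P"
  obtains Z where "proper Z" "\<forall>b\<in>F. lie b Z = 0" "lie P Z = 0"
proof (cases "lie P P = 0")
  case True
  with assms(6,7) show ?thesis
    using that unfolding proper_def by blast
next
  case False
  let ?F = "insert P F"
  have "lie_orthogonal_frame ?F"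
    using assms(1,6) False by (rule lie_orthogonal_frame_insert)
  moreover have "\<forall>b\<in>?F - {e}. lie b b > 0"
    using assms(4,8) False by auto
  moreover have "card ?F \<le> CARD('n) + 1"
    using assms(1,5) by (simp add: lie_orthogonal_frame_def card_insert_if)
  ultimately obtain Z where "proper Z" "\<forall>b\<in>?F. lie b Z = 0"
    using exists_null_orth_frame[of ?F e] assms(2,3) by blast
  then show ?thesis
    using that by blast
qed

lemma exists_null_orth_iff_residual_nonneg:
  fixes E :: "'n::finite lievec set"
  assumes "lie_orthogonal_frame E" and "e \<in> E" and "lie e e < 0"
    and "\<forall>b\<in>E - {e}. lie b b > 0" and "card E \<le> CARD('n)"
    and "\<forall>b\<in>E. lie b P = 0" and "Y - P \<in> span E" and "Y \<notin> span E"
  shows "(\<exists>Z. proper Z \<and> (\<forall>b\<in>E. lie b Z = 0) \<and> lie Z Y = 0) \<longleftrightarrow> 0 \<le> lie P P"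
proof
  assume "\<exists>Z. proper Z \<and> (\<forall>b\<in>E. lie b Z = 0) \<and> lie Z Y = 0"
  then obtain Z where Z: "proper Z" "\<forall>b\<in>E. lie b Z = 0" "lie Z Y = 0"
    by blast
  have "lie (Y - P) Z = 0"
    using lie_orth_span Z(2) assms(7) by blast
  then have "lie P Z = 0"
    using Z(3) lie_commute[of Y Z] by (simp add: lie_diff_left)
  moreover have "lie Z Z = 0" "Z \<noteq> 0"
    using Z(1) unfolding proper_def by auto
  ultimately show "0 \<le> lie P P"
    using lie_no_negative_orthogonal_triple[of e P Z] assms(2,3,6) Z(2) by fastforce
next
  assume "0 \<le> lie P P"
  moreover have "P \<noteq> 0"
    using assms(7,8) by auto
  ultimately obtain Z where Z: "proper Z" "\<forall>b\<in>E. lie b Z = 0" "lie P Z = 0"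
    using exists_null_orth_frame_vector[OF assms(1-6)] by blast
  moreover have "lie (Y - P) Z = 0"
    using lie_orth_span Z(2) assms(7) by blast
  then have "lie Z Y = 0"
    using Z(3) by (simp add: lie_diff_left lie_commute[of Z Y])
  ultimately show "\<exists>Z. proper Z \<and> (\<forall>b\<in>E. lie b Z = 0) \<and> lie Z Y = 0"
    by blast
qed

theorem mainTheorem9:
  fixes Xs :: "'n::finite lievec list" and S Y :: "'n lievec"
  assumes n3: "CARD('n) \<ge> 3"
    and k_lo: "2 \<le> length Xs" and k_hi: "length Xs \<le> CARD('n) - 1"
    and Xs_proper: "\<forall>X\<in>set Xs. proper X"
    and S_neg: "lie S S \<le> 0"
    and indep: "distinct (Xs @ [S]) \<and> independent (set (Xs @ [S]))"
    and Delta_neg: "gram_det (Xs @ [S]) < 0"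
    and Y_proper: "proper Y"
    and Y_notin: "Y \<notin> span (set (Xs @ [S]))"
    and YS: "lie Y S \<noteq> 0"
  shows "(\<exists>Z. proper Z \<and> (\<forall>X\<in>set (Xs @ [S]). lie X Z = 0) \<and> lie Z Y = 0)
           \<longleftrightarrow> discr Xs Y S \<le> 0"
proof -
  let ?L = "Xs @ [S]"
  obtain E where E: "lie_orthogonal_frame E" "span E = span (set ?L)" "card E = length ?L"
      "(\<Prod>b\<in>E. lie b b) < 0"
    using lie_orthogonal_frame_of_negative_gram indep Delta_neg by blast
  then obtain e where e: "e \<in> E" "lie e e < 0" "\<forall>b\<in>E - {e}. lie b b > 0"
    using lie_orthogonal_unique_negative unfolding lie_orthogonal_frame_def by blast
  define P where "P = Y - lie_proj E Y"
  have P_orth: "\<forall>b\<in>E. lie b P = 0"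
    using lie_orth_residual[OF E(1)] span_base unfolding P_def by blast
  have YP: "Y - P \<in> span E"
    using lie_proj_in_span[of E Y] by (simp add: P_def)
  have orth_iff: "(\<forall>X\<in>set ?L. lie X Z = 0) \<longleftrightarrow> (\<forall>b\<in>E. lie b Z = 0)" for Z
    using lie_orth_span_iff[OF E(2)] by blast
  have "discr Xs Y S \<le> 0 \<longleftrightarrow> 0 \<le> lie P P"
  proof (rule discr_nonpos_iff)
    show "Y - P \<in> span (set ?L)"
      using YP E(2) by simp
    show "\<forall>X\<in>set ?L. lie X P = 0"
      using P_orth orth_iff by blast
  qed (use indep Y_proper YS Delta_neg in \<open>auto simp: proper_def\<close>)
  moreover have "card E \<le> CARD('n)"
    using E(3) k_hi n3 by simp
  then have "(\<exists>Z. proper Z \<and> (\<forall>b\<in>E. lie b Z = 0) \<and> lie Z Y = 0) \<longleftrightarrow> 0 \<le> lie P P"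
    using exists_null_orth_iff_residual_nonneg[OF E(1) e] P_orth YP Y_notin E(2) by blast
  ultimately show ?thesis
    unfolding orth_iff by simp
qed

end
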